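(* Any quantum algorithm that solves the metric estimation problem on $n$ points with an approximation factor smaller than $3$ needs to make at least $\Omega(n^2)$ oracle calls.
   Context: Metric estimation: input is a metric space $\langle \mathcal{M},d\rangle$ with $\mathcal{M}=\{p_1,\dots,p_n\}$, accessible only via an oracle that on input $(i,j)$ returns $d(p_i,p_j)$. The output, with approximation factor $\alpha>1$, is an $n\times n$ matrix $A$ with $d(p_i,p_j)\le A[i][j]\le \alpha\, d(p_i,p_j)$ for all $1\le i,j\le n$. The complexity measure is the number of (quantum) oracle queries. *)

theory Defs
  imports "Jordan_Normal_Form.Matrix"
begin

text \<open>Finite metrics on the index set {0..<n} with natural-number distances below M
  (M is the size of the oracle's answer register).  Points are distinct, so distances
  between different indices are positive.\<close>
definition is_nat_metric :: "nat \<Rightarrow> nat \<Rightarrow> (nat \<Rightarrow> nat \<Rightarrow> nat) \<Rightarrow> bool" where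
  "is_nat_metric n M d \<longleftrightarrow>
     (\<forall>i<n. d i i = 0) \<and>
     (\<forall>i<n. \<forall>j<n. i \<noteq> j \<longrightarrow> 0 < d i j) \<and>
     (\<forall>i<n. \<forall>j<n. d i j = d j i) \<and>
     (\<forall>i<n. \<forall>j<n. \<forall>k<n. d i k \<le> d i j + d j k) \<and>
     (\<forall>i<n. \<forall>j<n. d i j < M)"

text \<open>Computational basis of C^(n*n*M*m): registers |i,j> (query), |a> (answer, in Z_M),
  |w> (workspace of dimension m).\<close>
definition qidx :: "nat \<Rightarrow> nat \<Rightarrow> nat \<Rightarrow> nat \<Rightarrow> nat \<Rightarrow> nat \<Rightarrow> nat \<Rightarrow> nat" where
  "qidx n M m i j a w = ((i * n + j) * M + a) * m + w"

definition qdim :: "nat \<Rightarrow> nat \<Rightarrow> nat \<Rightarrow> nat" where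
  "qdim n M m = n * n * M * m"

text \<open>Standard oracle: |i,j,a,w> \<mapsto> |i,j,(a + d(i,j)) mod M, w>.\<close>
definition oracle_mat :: "nat \<Rightarrow> nat \<Rightarrow> nat \<Rightarrow> (nat \<Rightarrow> nat \<Rightarrow> nat) \<Rightarrow> complex mat" where
  "oracle_mat n M m d = mat (qdim n M m) (qdim n M m) (\<lambda>(r, c).
      if \<exists>i j a w. i < n \<and> j < n \<and> a < M \<and> w < m \<and>
                   c = qidx n M m i j a w \<and> r = qidx n M m i j ((a + d i j) mod M) w
      then 1 else 0)"

definition adjoint_mat :: "complex mat \<Rightarrow> complex mat" where
  "adjoint_mat U = mat (dim_col U) (dim_row U) (\<lambda>(i, j). cnj (U $$ (j, i)))"

definition unitary_of_dim :: "nat \<Rightarrow> complex mat \<Rightarrow> bool" where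
  "unitary_of_dim D U \<longleftrightarrow> U \<in> carrier_mat D D \<and> adjoint_mat U * U = 1\<^sub>m D"

text \<open>Run: start in |0>, apply U0, then for every U in Us apply the oracle followed by U.
  The number of oracle queries is length Us.\<close>
fun run_after :: "complex mat \<Rightarrow> complex mat list \<Rightarrow> complex vec \<Rightarrow> complex vec" where
  "run_after Q [] v = v"
| "run_after Q (U # Us) v = run_after Q Us (U *\<^sub>v (Q *\<^sub>v v))"

definition final_state ::
  "nat \<Rightarrow> nat \<Rightarrow> nat \<Rightarrow> complex mat \<Rightarrow> complex mat list \<Rightarrow> (nat \<Rightarrow> nat \<Rightarrow> nat) \<Rightarrow> complex vec" where
  "final_state n M m U0 Us d =
     run_after (oracle_mat n M m d) Us (U0 *\<^sub>v unit_vec (qdim n M m) 0)"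

definition good_estimate :: "nat \<Rightarrow> real \<Rightarrow> (nat \<Rightarrow> nat \<Rightarrow> nat) \<Rightarrow> (nat \<Rightarrow> nat \<Rightarrow> real) \<Rightarrow> bool" where
  "good_estimate n \<alpha> d A \<longleftrightarrow>
     (\<forall>i<n. \<forall>j<n. real (d i j) \<le> A i j \<and> A i j \<le> \<alpha> * real (d i j))"

text \<open>Probability that measuring the final state in the computational basis and decoding
  the outcome k as out k yields a correct estimate.\<close>
definition success_prob ::
  "nat \<Rightarrow> nat \<Rightarrow> nat \<Rightarrow> real \<Rightarrow> complex mat \<Rightarrow> complex mat list \<Rightarrow>
   (nat \<Rightarrow> nat \<Rightarrow> nat \<Rightarrow> real) \<Rightarrow> (nat \<Rightarrow> nat \<Rightarrow> nat) \<Rightarrow> real" where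
  "success_prob n M m \<alpha> U0 Us out d =
     (let \<psi> = final_state n M m U0 Us d in
      \<Sum>k<qdim n M m. if good_estimate n \<alpha> d (out k) then (cmod (\<psi> $ k))\<^sup>2 else 0)"

definition solves_metric_estimation ::
  "nat \<Rightarrow> real \<Rightarrow> nat \<Rightarrow> nat \<Rightarrow> complex mat \<Rightarrow> complex mat list \<Rightarrow> (nat \<Rightarrow> nat \<Rightarrow> nat \<Rightarrow> real) \<Rightarrow> bool" where
  "solves_metric_estimation n \<alpha> M m U0 Us out \<longleftrightarrow>
     0 < m \<and> unitary_of_dim (qdim n M m) U0 \<and> (\<forall>U\<in>set Us. unitary_of_dim (qdim n M m) U) \<and>
     (\<forall>d. is_nat_metric n M d \<longrightarrow> success_prob n M m \<alpha> U0 Us out d \<ge> 2/3)"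

end

theory Submission
  imports Defs "HOL-Number_Theory.Cong" "HOL-Analysis.Convex"
begin

text \<open>Split the points into the halves L = {..<n div 2} and R = {n div 2..<n}. For a set Y of
  cross pairs (l, r) \<in> L \<times> R let d_Y have distance 3 on Y, 1 on the other cross pairs and 2 inside
  a half. Since \<alpha> < 3, a correct estimate for d_Y determines Y, so the outcomes that are correct
  for the 2^N instances d_Y (N = |L| |R| \<ge> (n^2 - 1) / 4) form disjoint sets.

  An oracle entry reads a single distance, which is affine in the indicators [e \<in> Y]; hence after
  T queries every amplitude is a multilinear polynomial of degree at most T in them (the polynomial
  method), and all final states lie in a space of dimension D \<le> sum_{j \<le> T} (N choose j). The
  outcome probabilities of unit vectors of a D-dimensional space are bounded by the diagonal of the
  orthogonal projection, which has total mass D. So 2/3 * 2^N \<le> D \<le> 4^T (5/4)^N, i.e. N \<le> 3 T.\<close>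

section \<open>The computational basis and the oracle\<close>

lemma mixed_radix_less:
  fixes x y p q :: nat
  assumes "x < p" "y < q"
  shows "x * q + y < p * q"
proof -
  have "x * q + y < (x + 1) * q" using assms(2) by simp
  also have "\<dots> \<le> p * q" using assms(1) by (intro mult_right_mono) auto
  finally show ?thesis .
qed

lemma mixed_radix_inject:
  fixes x y x' y' q :: nat
  assumes "y < q" "y' < q" "x * q + y = x' * q + y'"
  shows "x = x' \<and> y = y'"
proof -
  have "(x * q + y) div q = (x' * q + y') div q" "(x * q + y) mod q = (x' * q + y') mod q"
    using assms(3) by simp_all
  then show ?thesis using assms(1,2) by simp
qed

lemma mixed_radix_cases:
  fixes c p q :: nat
  assumes "c < p * q"
  obtains x y where "x < p" "y < q" "c = x * q + y"
proof
  show "c div q < p" using assms by (simp add: less_mult_imp_div_less)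
  show "c mod q < q" using assms by (metis mod_less_divisor mult_zero_right not_less_zero zero_less_iff_neq_zero)
qed simp

lemma qidx_less_qdim:
  assumes "i < n" "j < n" "a < M" "w < m"
  shows "qidx n M m i j a w < qdim n M m"
  unfolding qidx_def qdim_def using assms by (intro mixed_radix_less) auto

lemma qidx_inject:
  assumes "j < n" "a < M" "w < m" "j' < n" "a' < M" "w' < m"
    and "qidx n M m i j a w = qidx n M m i' j' a' w'"
  shows "i = i' \<and> j = j' \<and> a = a' \<and> w = w'"
  using assms unfolding qidx_def by (metis mixed_radix_inject)

lemma qdim_cases:
  assumes "c < qdim n M m"
  obtains i j a w where "i < n" "j < n" "a < M" "w < m" "c = qidx n M m i j a w"
proof -
  from assms obtain c1 w where c1: "c1 < n * n * M" and "w < m" "c = c1 * m + w"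
    unfolding qdim_def by (auto elim: mixed_radix_cases)
  moreover from c1 obtain c2 a where c2: "c2 < n * n" and "a < M" "c1 = c2 * M + a"
    by (auto elim: mixed_radix_cases)
  moreover from c2 obtain i j where "i < n" "j < n" "c2 = i * n + j"
    by (auto elim: mixed_radix_cases)
  ultimately show ?thesis using that unfolding qidx_def by blast
qed

lemma oracle_mat_carrier: "oracle_mat n M m d \<in> carrier_mat (qdim n M m) (qdim n M m)"
  unfolding oracle_mat_def by simp

lemma oracle_mat_entry:
  assumes "i < n" "j < n" "a < M" "w < m" "r < qdim n M m"
  shows "oracle_mat n M m d $$ (r, qidx n M m i j a w) =
           (if r = qidx n M m i j ((a + d i j) mod M) w then 1 else 0)"
proof -
  have "(\<exists>i' j' a' w'. i' < n \<and> j' < n \<and> a' < M \<and> w' < m \<and>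
           qidx n M m i j a w = qidx n M m i' j' a' w' \<and> r = qidx n M m i' j' ((a' + d i' j') mod M) w')
        \<longleftrightarrow> r = qidx n M m i j ((a + d i j) mod M) w"
    using assms qidx_inject[of j n a M w m] by blast
  then show ?thesis
    unfolding oracle_mat_def using assms qidx_less_qdim by simp
qed

lemma oracle_mat_entry_local:
  assumes "r < qdim n M m" "c < qdim n M m"
  obtains i j g where "i < n" "j < n" "\<And>d. oracle_mat n M m d $$ (r, c) = g (d i j)"
proof -
  obtain i j a w where "i < n" "j < n" "a < M" "w < m" "c = qidx n M m i j a w"
    using qdim_cases[OF assms(2)] .
  with assms(1) show ?thesis
    using that[of i j "\<lambda>t. if r = qidx n M m i j ((a + t) mod M) w then 1 else 0"]
    by (simp add: oracle_mat_entry)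
qed

section \<open>Vectors as functions on the first K naturals\<close>

text \<open>A vector of C^K is a function on nat of which only the values below K matter; this keeps
  the dimension bookkeeping of vec out of the inductions over query sequences.\<close>
definition mat_act :: "nat \<Rightarrow> complex mat \<Rightarrow> (nat \<Rightarrow> complex) \<Rightarrow> nat \<Rightarrow> complex" where
  "mat_act K A \<phi> = (\<lambda>r. if r < K then \<Sum>c<K. A $$ (r, c) * \<phi> c else 0)"

definition cinner :: "nat \<Rightarrow> (nat \<Rightarrow> complex) \<Rightarrow> (nat \<Rightarrow> complex) \<Rightarrow> complex" where
  "cinner K u v = (\<Sum>k<K. cnj (u k) * v k)"

definition sq_norm :: "nat \<Rightarrow> (nat \<Rightarrow> complex) \<Rightarrow> real" where
  "sq_norm K \<phi> = (\<Sum>k<K. (cmod (\<phi> k))\<^sup>2)"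

definition orthonormal_columns :: "nat \<Rightarrow> complex mat \<Rightarrow> bool" where
  "orthonormal_columns K A \<longleftrightarrow>
     (\<forall>c<K. \<forall>c'<K. (\<Sum>r<K. cnj (A $$ (r, c)) * A $$ (r, c')) = (if c = c' then 1 else 0))"

lemma mat_act_cong: "(\<And>k. k < K \<Longrightarrow> \<phi> k = \<phi>' k) \<Longrightarrow> mat_act K A \<phi> = mat_act K A \<phi>'"
  unfolding mat_act_def by (auto intro!: sum.cong)

lemma mat_act_zero [simp]: "mat_act K A (\<lambda>k. 0) = (\<lambda>k. 0)"
  unfolding mat_act_def by (simp only: mult_zero_right sum.neutral_const if_cancel)

lemma mat_act_add: "mat_act K A (\<lambda>k. f k + g k) = (\<lambda>k. mat_act K A f k + mat_act K A g k)"
  unfolding mat_act_def by (auto simp: distrib_left sum.distrib)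

lemma mat_act_if: "mat_act K A (\<lambda>k. if P then w k else 0) = (\<lambda>k. if P then mat_act K A w k else 0)"
  unfolding mat_act_def by auto

lemma mult_mat_vec_nth_mat_act:
  assumes "A \<in> carrier_mat K K" "v \<in> carrier_vec K" "k < K"
  shows "(A *\<^sub>v v) $ k = mat_act K A (($) v) k"
  using assms unfolding mat_act_def by (simp add: scalar_prod_def atLeast0LessThan)

lemma cinner_self: "cinner K u u = of_real (sq_norm K u)"
proof -
  have "\<And>z. complex_of_real ((cmod z)\<^sup>2) = cnj z * z"
    by (metis complex_norm_square mult.commute)
  then show ?thesis unfolding cinner_def sq_norm_def of_real_sum by simp
qed

lemma cinner_commute: "cinner K v u = cnj (cinner K u v)"
  unfolding cinner_def by (simp add: mult.commute)

lemma sq_norm_nonneg: "0 \<le> sq_norm K u"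
  unfolding sq_norm_def by (simp add: sum_nonneg)

lemma sq_norm_eq_0: "sq_norm K u = 0 \<Longrightarrow> k < K \<Longrightarrow> u k = 0"
  unfolding sq_norm_def by (subst (asm) sum_nonneg_eq_0_iff) auto

lemma sq_norm_mat_act:
  assumes "orthonormal_columns K A"
  shows "sq_norm K (mat_act K A \<phi>) = sq_norm K \<phi>"
proof -
  have "complex_of_real (sq_norm K (mat_act K A \<phi>)) =
        (\<Sum>r<K. cnj (\<Sum>c<K. A $$ (r, c) * \<phi> c) * (\<Sum>c'<K. A $$ (r, c') * \<phi> c'))"
    unfolding cinner_self[symmetric] cinner_def mat_act_def by simp
  also have "\<dots> = (\<Sum>r<K. \<Sum>c'<K. \<Sum>c<K. cnj (\<phi> c) * \<phi> c' * (cnj (A $$ (r, c)) * A $$ (r, c')))"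
    by (simp add: sum_product algebra_simps)
  also have "\<dots> = (\<Sum>c'<K. \<Sum>r<K. \<Sum>c<K. cnj (\<phi> c) * \<phi> c' * (cnj (A $$ (r, c)) * A $$ (r, c')))"
    by (rule sum.swap)
  also have "\<dots> = (\<Sum>c'<K. \<Sum>c<K. \<Sum>r<K. cnj (\<phi> c) * \<phi> c' * (cnj (A $$ (r, c)) * A $$ (r, c')))"
    by (rule sum.cong[OF refl], rule sum.swap)
  also have "\<dots> = (\<Sum>c'<K. \<Sum>c<K. cnj (\<phi> c) * \<phi> c' * (if c = c' then 1 else 0))"
    using assms unfolding orthonormal_columns_def by (simp flip: sum_distrib_left)
  also have "\<dots> = (\<Sum>c<K. cnj (\<phi> c) * \<phi> c)"
    by (simp add: if_distrib eq_commute cong: if_cong)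
  also have "\<dots> = complex_of_real (sq_norm K \<phi>)"
    unfolding cinner_self[symmetric] cinner_def ..
  finally show ?thesis by simp
qed

lemma unitary_of_dim_orthonormal_columns:
  assumes "unitary_of_dim K U"
  shows "orthonormal_columns K U"
  unfolding orthonormal_columns_def
proof (intro allI impI)
  fix c c' assume c: "c < K" "c' < K"
  have U: "U \<in> carrier_mat K K" and inv: "adjoint_mat U * U = 1\<^sub>m K"
    using assms unfolding unitary_of_dim_def by auto
  have "(adjoint_mat U * U) $$ (c, c') = (\<Sum>r<K. cnj (U $$ (r, c)) * U $$ (r, c'))"
    using U c unfolding adjoint_mat_def by (simp add: scalar_prod_def atLeast0LessThan)
  then show "(\<Sum>r<K. cnj (U $$ (r, c)) * U $$ (r, c')) = (if c = c' then 1 else 0)"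
    using inv c by simp
qed

lemma oracle_target_inject:
  assumes "j < n" "a < M" "w < m" "j' < n" "a' < M" "w' < m"
  shows "qidx n M m i j ((a + d i j) mod M) w = qidx n M m i' j' ((a' + d i' j') mod M) w' \<longleftrightarrow>
         i = i' \<and> j = j' \<and> a = a' \<and> w = w'"
proof
  assume "qidx n M m i j ((a + d i j) mod M) w = qidx n M m i' j' ((a' + d i' j') mod M) w'"
  then have "i = i' \<and> j = j' \<and> (a + d i j) mod M = (a' + d i' j') mod M \<and> w = w'"
    using assms by (intro qidx_inject) auto
  then have "i = i'" "j = j'" "w = w'" and "[a + d i j = a' + d i j] (mod M)"
    by (auto simp: cong_def)
  moreover from this(4) have "a = a'"
    using assms(2,5) unfolding cong_add_rcancel_nat by (simp add: cong_def)
  ultimately show "i = i' \<and> j = j' \<and> a = a' \<and> w = w'"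
    by simp
qed simp

text \<open>The oracle permutes the computational basis.\<close>
lemma orthonormal_columns_oracle_mat: "orthonormal_columns (qdim n M m) (oracle_mat n M m d)"
  unfolding orthonormal_columns_def
proof (intro allI impI)
  let ?K = "qdim n M m" and ?O = "oracle_mat n M m d"
  fix c c' assume "c < ?K" "c' < ?K"
  obtain i j a w where c: "i < n" "j < n" "a < M" "w < m" "c = qidx n M m i j a w"
    using qdim_cases[OF \<open>c < ?K\<close>] .
  obtain i' j' a' w' where c': "i' < n" "j' < n" "a' < M" "w' < m" "c' = qidx n M m i' j' a' w'"
    using qdim_cases[OF \<open>c' < ?K\<close>] .
  define p where "p = qidx n M m i j ((a + d i j) mod M) w"
  define p' where "p' = qidx n M m i' j' ((a' + d i' j') mod M) w'"
  have p: "p < ?K"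
    unfolding p_def using c by (intro qidx_less_qdim) auto
  have "c = c' \<longleftrightarrow> i = i' \<and> j = j' \<and> a = a' \<and> w = w'"
    using c c' qidx_inject[of j n a M w m j' a' w' i i'] by auto
  moreover have "p = p' \<longleftrightarrow> i = i' \<and> j = j' \<and> a = a' \<and> w = w'"
    unfolding p_def p'_def by (rule oracle_target_inject) (simp_all add: c c')
  ultimately have "p = p' \<longleftrightarrow> c = c'"
    by simp
  have "(\<Sum>r<?K. cnj (?O $$ (r, c)) * ?O $$ (r, c')) =
        (\<Sum>r<?K. if r = p then (if p = p' then 1 else 0) else 0)"
    by (rule sum.cong[OF refl]) (simp add: c c' oracle_mat_entry p_def p'_def)
  also have "\<dots> = (if c = c' then 1 else 0)"
    using p \<open>p = p' \<longleftrightarrow> c = c'\<close> by simp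
  finally show "(\<Sum>r<?K. cnj (?O $$ (r, c)) * ?O $$ (r, c')) = (if c = c' then 1 else 0)" .
qed

fun run_fn :: "nat \<Rightarrow> complex mat \<Rightarrow> complex mat list \<Rightarrow> (nat \<Rightarrow> complex) \<Rightarrow> nat \<Rightarrow> complex" where
  "run_fn K Q [] \<phi> = \<phi>"
| "run_fn K Q (U # Us) \<phi> = run_fn K Q Us (mat_act K U (mat_act K Q \<phi>))"

lemma run_fn_cong:
  assumes "\<And>k. k < K \<Longrightarrow> \<phi> k = \<phi>' k" "k < K"
  shows "run_fn K Q Us \<phi> k = run_fn K Q Us \<phi>' k"
  using assms mat_act_cong[of K \<phi> \<phi>' Q] by (cases Us) simp_all

lemma run_after_nth:
  assumes "Q \<in> carrier_mat K K" "\<forall>U\<in>set Us. U \<in> carrier_mat K K" "v \<in> carrier_vec K" "k < K"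
  shows "run_after Q Us v $ k = run_fn K Q Us (($) v) k"
  using assms(2-4)
proof (induction Us arbitrary: v)
  case Nil
  then show ?case by simp
next
  case (Cons U Us)
  have U: "U \<in> carrier_mat K K" using Cons.prems(1) by simp
  have Qv: "Q *\<^sub>v v \<in> carrier_vec K" using assms(1) Cons.prems(2) by simp
  have step: "(U *\<^sub>v (Q *\<^sub>v v)) $ i = mat_act K U (mat_act K Q (($) v)) i" if "i < K" for i
  proof -
    have "(U *\<^sub>v (Q *\<^sub>v v)) $ i = mat_act K U (($) (Q *\<^sub>v v)) i"
      using U Qv that by (rule mult_mat_vec_nth_mat_act)
    also have "mat_act K U (($) (Q *\<^sub>v v)) = mat_act K U (mat_act K Q (($) v))"
      using mult_mat_vec_nth_mat_act[OF assms(1) Cons.prems(2)] by (intro mat_act_cong) simp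
    finally show ?thesis .
  qed
  have "run_after Q (U # Us) v $ k = run_fn K Q Us (($) (U *\<^sub>v (Q *\<^sub>v v))) k"
    using Cons.IH[of "U *\<^sub>v (Q *\<^sub>v v)"] Cons.prems U Qv by simp
  also have "\<dots> = run_fn K Q (U # Us) (($) v) k"
    using run_fn_cong[OF step Cons.prems(3)] by simp
  finally show ?case .
qed

lemma sq_norm_run_fn:
  assumes "orthonormal_columns K Q" "\<forall>U\<in>set Us. orthonormal_columns K U"
  shows "sq_norm K (run_fn K Q Us \<phi>) = sq_norm K \<phi>"
  using assms(2) by (induction Us arbitrary: \<phi>) (simp_all add: sq_norm_mat_act assms(1))

lemma sq_norm_final_state:
  assumes "0 < qdim n M m" "unitary_of_dim (qdim n M m) U0"
    and "\<forall>U\<in>set Us. unitary_of_dim (qdim n M m) U"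
  shows "sq_norm (qdim n M m) (($) (final_state n M m U0 Us d)) = 1"
proof -
  let ?K = "qdim n M m" and ?e = "unit_vec (qdim n M m) 0"
  have U0: "U0 \<in> carrier_mat ?K ?K" and Us: "\<forall>U\<in>set Us. U \<in> carrier_mat ?K ?K"
    using assms(2,3) unfolding unitary_of_dim_def by auto
  have "U0 *\<^sub>v ?e \<in> carrier_vec ?K"
    using U0 by simp
  then have "sq_norm ?K (($) (final_state n M m U0 Us d)) =
        sq_norm ?K (run_fn ?K (oracle_mat n M m d) Us (($) (U0 *\<^sub>v ?e)))"
    unfolding sq_norm_def final_state_def
    by (intro sum.cong refl) (simp add: run_after_nth[OF oracle_mat_carrier Us])
  also have "\<dots> = sq_norm ?K (($) (U0 *\<^sub>v ?e))"
    using assms(3) unitary_of_dim_orthonormal_columns orthonormal_columns_oracle_mat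
    by (intro sq_norm_run_fn) auto
  also have "\<dots> = sq_norm ?K (mat_act ?K U0 (($) ?e))"
    unfolding sq_norm_def
    by (intro sum.cong refl) (simp only: lessThan_iff mult_mat_vec_nth_mat_act[OF U0 unit_vec_carrier])
  also have "\<dots> = sq_norm ?K (($) ?e)"
    using assms(2) by (intro sq_norm_mat_act unitary_of_dim_orthonormal_columns)
  also have "\<dots> = 1"
    unfolding sq_norm_def using assms(1) by (simp add: unit_vec_def if_distrib[of "\<lambda>z. (cmod z)\<^sup>2"] cong: if_cong)
  finally show ?thesis .
qed

section \<open>Orthogonal bases and projection weights\<close>

definition lin_comb :: "(nat \<Rightarrow> complex) list \<Rightarrow> (nat \<Rightarrow> complex) \<Rightarrow> nat \<Rightarrow> complex" where
  "lin_comb C a k = (\<Sum>i<length C. a i * (C ! i) k)"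

definition in_span :: "nat \<Rightarrow> (nat \<Rightarrow> complex) list \<Rightarrow> (nat \<Rightarrow> complex) \<Rightarrow> bool" where
  "in_span K C b \<longleftrightarrow> (\<exists>a. \<forall>k<K. b k = lin_comb C a k)"

definition orthogonal_list :: "nat \<Rightarrow> (nat \<Rightarrow> complex) list \<Rightarrow> bool" where
  "orthogonal_list K C \<longleftrightarrow>
     (\<forall>i<length C. \<forall>j<length C. i \<noteq> j \<longrightarrow> cinner K (C ! i) (C ! j) = 0) \<and>
     (\<forall>i<length C. sq_norm K (C ! i) \<noteq> 0)"

lemma lin_comb_cong: "(\<And>i. i < length C \<Longrightarrow> a i = a' i) \<Longrightarrow> lin_comb C a = lin_comb C a'"
  unfolding lin_comb_def by (auto intro!: sum.cong)

lemma lin_comb_snoc: "lin_comb (C @ [r]) a k = lin_comb C a k + a (length C) * r k"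
proof -
  have "(\<Sum>i<length C. a i * ((C @ [r]) ! i) k) = lin_comb C a k"
    unfolding lin_comb_def by (intro sum.cong) (auto simp: nth_append)
  then show ?thesis
    unfolding lin_comb_def by simp
qed

lemma cinner_lin_comb: "cinner K u (lin_comb C a) = (\<Sum>i<length C. a i * cinner K u (C ! i))"
  unfolding cinner_def lin_comb_def
  by (simp add: sum_distrib_left sum.swap[of _ "{..<K}"] algebra_simps)

lemma cinner_lin_comb_orthogonal:
  assumes "orthogonal_list K C" "j < length C"
  shows "cinner K (C ! j) (lin_comb C a) = a j * of_real (sq_norm K (C ! j))"
proof -
  have "cinner K (C ! j) (lin_comb C a) = (\<Sum>i<length C. if i = j then a j * cinner K (C ! j) (C ! j) else 0)"
    unfolding cinner_lin_comb using assms unfolding orthogonal_list_def by (intro sum.cong) auto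
  then show ?thesis
    using assms(2) by (simp add: cinner_self)
qed

lemma in_span_snoc:
  assumes "in_span K C x"
  shows "in_span K (C @ [r]) x"
proof -
  obtain a where a: "\<forall>k<K. x k = lin_comb C a k"
    using assms unfolding in_span_def by blast
  have "lin_comb (C @ [r]) (a(length C := 0)) k = lin_comb C a k" for k
    unfolding lin_comb_snoc using lin_comb_cong[of C "a(length C := 0)" a] by simp
  then show ?thesis
    using a unfolding in_span_def by (intro exI[of _ "a(length C := 0)"]) simp
qed

lemma orthogonal_list_snoc:
  assumes "orthogonal_list K C" "\<And>i. i < length C \<Longrightarrow> cinner K (C ! i) r = 0" "sq_norm K r \<noteq> 0"
  shows "orthogonal_list K (C @ [r])"
proof -
  have "cinner K r (C ! i) = 0" if "i < length C" for i
    using assms(2)[OF that] cinner_commute[of K r "C ! i"] by simp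
  then show ?thesis
    using assms unfolding orthogonal_list_def by (auto simp: nth_append less_Suc_eq)
qed

lemma orthogonal_extend:
  assumes "orthogonal_list K C"
  obtains C' where "length C' \<le> Suc (length C)" "orthogonal_list K C'"
    "\<And>x. in_span K C x \<Longrightarrow> in_span K C' x" "in_span K C' b"
proof -
  define coef where "coef i = cinner K (C ! i) b / of_real (sq_norm K (C ! i))" for i
  define r where "r k = b k - lin_comb C coef k" for k
  have r_orth: "cinner K (C ! j) r = 0" if "j < length C" for j
  proof -
    have "cinner K (C ! j) r = cinner K (C ! j) b - cinner K (C ! j) (lin_comb C coef)"
      unfolding r_def cinner_def by (simp add: right_diff_distrib sum_subtractf)
    also have "cinner K (C ! j) (lin_comb C coef) = cinner K (C ! j) b"
      using assms that unfolding cinner_lin_comb_orthogonal[OF assms that] coef_def orthogonal_list_def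
      by simp
    finally show ?thesis by simp
  qed
  show ?thesis
  proof (cases "sq_norm K r = 0")
    case True
    then have "in_span K C b"
      unfolding in_span_def using sq_norm_eq_0[OF True] by (intro exI[of _ coef]) (simp add: r_def)
    then show ?thesis using that[of C] assms by simp
  next
    case False
    have "b k = lin_comb (C @ [r]) (coef(length C := 1)) k" for k
      unfolding lin_comb_snoc r_def using lin_comb_cong[of C "coef(length C := 1)" coef] by simp
    then have "in_span K (C @ [r]) b"
      unfolding in_span_def by blast
    then show ?thesis
      using that[of "C @ [r]"] orthogonal_list_snoc[OF assms r_orth False] in_span_snoc by simp
  qed
qed

lemma orthogonal_basis_exists:
  assumes "finite I"
  shows "\<exists>C. length C \<le> card I \<and> orthogonal_list K C \<and> (\<forall>s\<in>I. in_span K C (v s))"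
  using assms
proof (induction I rule: finite_induct)
  case empty
  show ?case by (intro exI[of _ "[]"]) (simp add: orthogonal_list_def)
next
  case (insert s I)
  then obtain C where C: "length C \<le> card I" "orthogonal_list K C" "\<forall>s\<in>I. in_span K C (v s)"
    by blast
  obtain C' where "length C' \<le> Suc (length C)" "orthogonal_list K C'"
    "\<And>x. in_span K C x \<Longrightarrow> in_span K C' x" "in_span K C' (v s)"
    using orthogonal_extend[OF C(2), where b = "v s"] by blast
  then show ?case
    using C insert by (intro exI[of _ C']) auto
qed

lemma in_span_sum:
  assumes "\<And>s. s \<in> I \<Longrightarrow> in_span K C (v s)" "\<And>k. k < K \<Longrightarrow> \<psi> k = (\<Sum>s\<in>I. c s * v s k)"
  shows "in_span K C \<psi>"
proof -
  have "\<forall>s\<in>I. \<exists>a. \<forall>k<K. v s k = lin_comb C a k"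
    using assms(1) unfolding in_span_def by blast
  from bchoice[OF this] obtain \<beta> where \<beta>: "\<forall>s\<in>I. \<forall>k<K. v s k = lin_comb C (\<beta> s) k" ..
  have "\<psi> k = lin_comb C (\<lambda>i. \<Sum>s\<in>I. c s * \<beta> s i) k" if "k < K" for k
  proof -
    have "\<psi> k = (\<Sum>s\<in>I. \<Sum>i<length C. c s * \<beta> s i * (C ! i) k)"
      unfolding assms(2)[OF that] using \<beta> that
      by (intro sum.cong refl) (simp add: lin_comb_def sum_distrib_left mult.assoc)
    then show ?thesis
      unfolding lin_comb_def by (simp add: sum.swap[of _ I] sum_distrib_right)
  qed
  then show ?thesis
    unfolding in_span_def by blast
qed

lemma sq_norm_lin_comb:
  assumes "orthogonal_list K C"
  shows "sq_norm K (lin_comb C a) = (\<Sum>i<length C. (cmod (a i))\<^sup>2 * sq_norm K (C ! i))"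
proof -
  have "complex_of_real (sq_norm K (lin_comb C a)) = (\<Sum>i<length C. a i * cinner K (lin_comb C a) (C ! i))"
    by (simp flip: cinner_self add: cinner_lin_comb)
  also have "\<dots> = (\<Sum>i<length C. a i * cnj (a i * of_real (sq_norm K (C ! i))))"
    using cinner_lin_comb_orthogonal[OF assms] cinner_commute[of K "lin_comb C a"] by (intro sum.cong refl) simp
  also have "\<dots> = (\<Sum>i<length C. complex_of_real ((cmod (a i))\<^sup>2 * sq_norm K (C ! i)))"
    by (intro sum.cong refl) (simp only: of_real_mult complex_norm_square complex_cnj_mult complex_cnj_complex_of_real mult_ac)
  also have "\<dots> = complex_of_real (\<Sum>i<length C. (cmod (a i))\<^sup>2 * sq_norm K (C ! i))"
    by (simp only: of_real_sum)
  finally show ?thesis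
    using of_real_eq_iff by blast
qed

text \<open>For orthogonal C, the squared length of the projection of the k-th unit vector
  onto the span of C.\<close>
definition proj_weight :: "nat \<Rightarrow> (nat \<Rightarrow> complex) list \<Rightarrow> nat \<Rightarrow> real" where
  "proj_weight K C k = (\<Sum>i<length C. (cmod ((C ! i) k))\<^sup>2 / sq_norm K (C ! i))"

lemma proj_weight_nonneg: "0 \<le> proj_weight K C k"
  unfolding proj_weight_def by (simp add: sum_nonneg sq_norm_nonneg)

lemma sum_proj_weight:
  assumes "orthogonal_list K C"
  shows "(\<Sum>k<K. proj_weight K C k) = length C"
proof -
  have "(\<Sum>k<K. proj_weight K C k) = (\<Sum>i<length C. (\<Sum>k<K. (cmod ((C ! i) k))\<^sup>2) / sq_norm K (C ! i))"
    unfolding proj_weight_def by (subst sum.swap) (simp add: sum_divide_distrib)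
  also have "\<dots> = (\<Sum>i<length C. 1)"
    using assms unfolding orthogonal_list_def sq_norm_def[symmetric] by (intro sum.cong) auto
  finally show ?thesis by simp
qed

lemma coordinate_sq_le_proj_weight:
  assumes "orthogonal_list K C" "in_span K C \<psi>" "k < K"
  shows "(cmod (\<psi> k))\<^sup>2 \<le> sq_norm K \<psi> * proj_weight K C k"
proof -
  obtain a where a: "\<And>k. k < K \<Longrightarrow> \<psi> k = lin_comb C a k"
    using assms(2) unfolding in_span_def by blast
  define s where "s i = sqrt (sq_norm K (C ! i))" for i
  have s: "0 < s i" "(s i)\<^sup>2 = sq_norm K (C ! i)" if "i < length C" for i
    using assms(1) that sq_norm_nonneg[of K "C ! i"] unfolding s_def orthogonal_list_def by auto
  have "cmod (\<psi> k) \<le> (\<Sum>i<length C. cmod (a i) * cmod ((C ! i) k))"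
    unfolding a[OF assms(3)] lin_comb_def by (rule order_trans[OF norm_sum]) (simp add: norm_mult)
  also have "\<dots> = (\<Sum>i<length C. (cmod (a i) * s i) * (cmod ((C ! i) k) / s i))"
  proof (intro sum.cong refl)
    fix i assume "i \<in> {..<length C}"
    then have "s i \<noteq> 0" using s(1) by force
    then show "cmod (a i) * cmod ((C ! i) k) = cmod (a i) * s i * (cmod ((C ! i) k) / s i)"
      by simp
  qed
  finally have "(cmod (\<psi> k))\<^sup>2 \<le> (\<Sum>i<length C. (cmod (a i) * s i) * (cmod ((C ! i) k) / s i))\<^sup>2"
    by (simp add: power_mono)
  also have "\<dots> \<le> (\<Sum>i<length C. (cmod (a i) * s i)\<^sup>2) * (\<Sum>i<length C. (cmod ((C ! i) k) / s i)\<^sup>2)"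
    by (rule Cauchy_Schwarz_ineq_sum)
  also have "(\<Sum>i<length C. (cmod (a i) * s i)\<^sup>2) = sq_norm K \<psi>"
  proof -
    have "sq_norm K \<psi> = sq_norm K (lin_comb C a)"
      unfolding sq_norm_def using a by simp
    then show ?thesis
      using s by (simp add: sq_norm_lin_comb[OF assms(1)] power_mult_distrib)
  qed
  also have "(\<Sum>i<length C. (cmod ((C ! i) k) / s i)\<^sup>2) = proj_weight K C k"
    unfolding proj_weight_def using s by (intro sum.cong refl) (simp add: power_divide)
  finally show ?thesis .
qed

text \<open>The weight is the diagonal of the orthogonal projection onto the span of the v s.\<close>
lemma unit_vectors_weight_bound:
  assumes "finite I" "\<And>y. sq_norm K (\<psi> y) = 1"
    and "\<And>y k. k < K \<Longrightarrow> \<psi> y k = (\<Sum>s\<in>I. c y s * v s k)"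
  shows "\<exists>w. (\<forall>k. 0 \<le> w k) \<and> (\<Sum>k<K. w k) \<le> real (card I) \<and>
             (\<forall>y. \<forall>k<K. (cmod (\<psi> y k))\<^sup>2 \<le> w k)"
proof -
  obtain C where C: "length C \<le> card I" "orthogonal_list K C" "\<forall>s\<in>I. in_span K C (v s)"
    using orthogonal_basis_exists[OF assms(1)] by blast
  have span: "in_span K C (\<psi> y)" for y
    using C(3) assms(3) by (intro in_span_sum[of I K C v "\<psi> y" "c y"]) auto
  have "(cmod (\<psi> y k))\<^sup>2 \<le> proj_weight K C k" if "k < K" for y k
    using coordinate_sq_le_proj_weight[OF C(2) span that] assms(2) by simp
  then show ?thesis
    using proj_weight_nonneg sum_proj_weight[OF C(2)] C(1)
    by (intro exI[of _ "proj_weight K C"]) auto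
qed

lemma disjoint_family_weight_bound:
  fixes w :: "nat \<Rightarrow> real" and p :: real
  assumes "finite P" "\<And>k. 0 \<le> w k" "\<And>Y. Y \<in> P \<Longrightarrow> A Y \<subseteq> {..<K}"
    and "\<And>Y Y'. Y \<in> P \<Longrightarrow> Y' \<in> P \<Longrightarrow> Y \<noteq> Y' \<Longrightarrow> A Y \<inter> A Y' = {}"
    and "\<And>Y. Y \<in> P \<Longrightarrow> p \<le> (\<Sum>k\<in>A Y. w k)"
  shows "real (card P) * p \<le> (\<Sum>k<K. w k)"
proof -
  have "real (card P) * p \<le> (\<Sum>Y\<in>P. \<Sum>k\<in>A Y. w k)"
    using sum_mono[of P "\<lambda>_. p", OF assms(5)] by simp
  also have "\<dots> = (\<Sum>k\<in>(\<Union>Y\<in>P. A Y). w k)"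
    using assms(1,3,4) by (intro sum.UNION_disjoint[symmetric]) (auto intro: finite_subset)
  also have "\<dots> \<le> (\<Sum>k<K. w k)"
    using assms(2,3) by (intro sum_mono2) auto
  finally show ?thesis .
qed

section \<open>Counting small subsets\<close>

definition subsets_upto :: "'a set \<Rightarrow> nat \<Rightarrow> 'a set set" where
  "subsets_upto E t = {S. S \<subseteq> E \<and> card S \<le> t}"

lemma finite_subsets_upto: "finite E \<Longrightarrow> finite (subsets_upto E t)"
  unfolding subsets_upto_def by simp

lemma card_subsets_upto:
  assumes "finite E"
  shows "card (subsets_upto E t) = (\<Sum>j\<le>t. card E choose j)"
proof -
  have "subsets_upto E t = (\<Union>j\<le>t. {S. S \<subseteq> E \<and> card S = j})"
    unfolding subsets_upto_def by auto
  also have "card \<dots> = (\<Sum>j\<le>t. card {S. S \<subseteq> E \<and> card S = j})"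
    using assms by (intro card_UN_disjoint) auto
  finally show ?thesis
    using assms by (simp add: n_subsets)
qed

text \<open>Weight the j-th term by 4^(t-j) \<ge> 1 and expand (1 + 4)^N by the binomial theorem.\<close>
lemma sum_choose_mult_pow_le: "(\<Sum>j\<le>t. N choose j) * 4 ^ N \<le> 4 ^ t * (5::nat) ^ N"
proof -
  define g where "g j = (N choose j) * 4 ^ (N - j)" for j
  have "(\<Sum>j\<le>t. g j) = (\<Sum>j\<le>min t N. g j)"
    unfolding g_def by (rule sum.mono_neutral_right) auto
  also have "\<dots> \<le> (\<Sum>j\<le>N. g j)"
    by (rule sum_mono2) auto
  also have "\<dots> = 5 ^ N"
    using binomial_ring[of "1::nat" 4 N] unfolding g_def by simp
  finally have g_sum: "(\<Sum>j\<le>t. g j) \<le> 5 ^ N" .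
  have "(\<Sum>j\<le>t. N choose j) * 4 ^ N = (\<Sum>j\<le>t. (N choose j) * 4 ^ N)"
    by (simp add: sum_distrib_right)
  also have "\<dots> \<le> (\<Sum>j\<le>t. 4 ^ t * g j)"
  proof (rule sum_mono)
    fix j assume "j \<in> {..t}"
    then have "N \<le> t + (N - j) \<or> N < j" by auto
    then show "(N choose j) * 4 ^ N \<le> 4 ^ t * g j"
      unfolding g_def by (auto simp: power_add[symmetric] intro: power_increasing)
  qed
  also have "\<dots> \<le> 4 ^ t * 5 ^ N"
    using g_sum by (simp add: sum_distrib_left[symmetric])
  finally show ?thesis .
qed

text \<open>Uses 8^3 \<ge> 4 * 5^3 and 2 * 8 > 3 * 5.\<close>
lemma le_of_exp_ineq:
  fixes N T :: nat
  assumes "(2::nat) * 8 ^ N \<le> 3 * 4 ^ T * 5 ^ N"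
  shows "N \<le> 3 * T"
proof (rule ccontr)
  assume "\<not> N \<le> 3 * T"
  then obtain k where N: "N = 3 * T + Suc k"
    by (metis add_Suc_right less_imp_Suc_add not_le)
  have "3 * 4 ^ T * 5 ^ N = (15::nat) * (500 ^ T * 5 ^ k)"
    unfolding N by (simp add: power_add power_mult power_mult_distrib[symmetric])
  moreover have "2 * 8 ^ N = (16::nat) * (512 ^ T * 8 ^ k)"
    unfolding N by (simp add: power_add power_mult)
  moreover have "500 ^ T * 5 ^ k \<le> (512 ^ T * 8 ^ k :: nat)"
    by (intro mult_mono power_mono) auto
  moreover have "0 < (512 ^ T * 8 ^ k :: nat)"
    by simp
  ultimately show False
    using assms by linarith
qed

lemma card_le_of_pow_le_subsets_upto:
  assumes "finite E" "2 * 2 ^ card E \<le> 3 * card (subsets_upto E T)"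
  shows "card E \<le> 3 * T"
proof -
  have "(2::nat) * 8 ^ card E = 2 * 2 ^ card E * 4 ^ card E"
    by (simp add: power_mult_distrib[symmetric])
  also have "\<dots> \<le> 3 * card (subsets_upto E T) * 4 ^ card E"
    using assms(2) by simp
  also have "\<dots> \<le> 3 * (4 ^ T * 5 ^ card E)"
    using sum_choose_mult_pow_le[of "card E" T] unfolding card_subsets_upto[OF assms(1)] by simp
  finally show ?thesis
    by (intro le_of_exp_ineq) simp
qed

section \<open>The hard instances\<close>

definition cross_pairs :: "nat \<Rightarrow> (nat \<times> nat) set" where
  "cross_pairs n = {..<n div 2} \<times> {n div 2..<n}"

definition hard_metric :: "nat \<Rightarrow> (nat \<times> nat) set \<Rightarrow> nat \<Rightarrow> nat \<Rightarrow> nat" where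
  "hard_metric n Y i j =
     (if i = j then 0
      else if (i < n div 2) = (j < n div 2) then 2
      else if (min i j, max i j) \<in> Y then 3 else 1)"

lemma finite_cross_pairs: "finite (cross_pairs n)"
  unfolding cross_pairs_def by simp

lemma card_cross_pairs: "card (cross_pairs n) = n div 2 * (n - n div 2)"
  unfolding cross_pairs_def by (simp add: card_cartesian_product)

lemma square_le_card_cross_pairs: "n\<^sup>2 \<le> 4 * card (cross_pairs n) + 1"
proof -
  have "n = 2 * (n div 2) \<or> n = 2 * (n div 2) + 1" by presburger
  then obtain h where "n = 2 * h \<or> n = 2 * h + 1" by blast
  then show ?thesis
    unfolding card_cross_pairs by (elim disjE) (simp_all add: power2_eq_square algebra_simps)
qed

text \<open>All off-diagonal distances lie in {1, 2, 3}, so the triangle inequality is automatic.\<close>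
lemma is_nat_metric_hard_metric: "3 < M \<Longrightarrow> is_nat_metric n M (hard_metric n Y)"
  unfolding is_nat_metric_def hard_metric_def by auto

lemma good_estimate_hard_metric_inject:
  assumes "\<alpha> < 3" "Y \<subseteq> cross_pairs n" "Y' \<subseteq> cross_pairs n"
    and "good_estimate n \<alpha> (hard_metric n Y) A" "good_estimate n \<alpha> (hard_metric n Y') A"
  shows "Y = Y'"
proof -
  have "e \<in> Z'" if e: "e \<in> Z" "e \<in> cross_pairs n"
    and est: "good_estimate n \<alpha> (hard_metric n Z) A" "good_estimate n \<alpha> (hard_metric n Z') A" for Z Z' e
  proof (rule ccontr)
    assume "e \<notin> Z'"
    obtain l r where lr: "e = (l, r)" "l < n div 2" "n div 2 \<le> r" "r < n"
      using e(2) unfolding cross_pairs_def by auto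
    then have "hard_metric n Z l r = 3" "hard_metric n Z' l r = 1"
      using e(1) \<open>e \<notin> Z'\<close> unfolding hard_metric_def by auto
    moreover have "real (hard_metric n Z l r) \<le> A l r" "A l r \<le> \<alpha> * real (hard_metric n Z' l r)"
      using est lr unfolding good_estimate_def by auto
    ultimately show False using assms(1) by simp
  qed
  then show ?thesis using assms by blast
qed

definition success_set ::
  "nat \<Rightarrow> real \<Rightarrow> nat \<Rightarrow> nat \<Rightarrow> (nat \<Rightarrow> nat \<Rightarrow> nat \<Rightarrow> real) \<Rightarrow> (nat \<Rightarrow> nat \<Rightarrow> nat) \<Rightarrow> nat set" where
  "success_set n \<alpha> M m out d = {k \<in> {..<qdim n M m}. good_estimate n \<alpha> d (out k)}"

lemma success_prob_le_weight:
  assumes "\<And>k. k < qdim n M m \<Longrightarrow> (cmod (final_state n M m U0 Us d $ k))\<^sup>2 \<le> w k"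
  shows "success_prob n M m \<alpha> U0 Us out d \<le> (\<Sum>k\<in>success_set n \<alpha> M m out d. w k)"
proof -
  have "success_prob n M m \<alpha> U0 Us out d \<le>
        (\<Sum>k<qdim n M m. if good_estimate n \<alpha> d (out k) then w k else 0)"
    unfolding success_prob_def Let_def using assms by (intro sum_mono) auto
  also have "\<dots> = (\<Sum>k\<in>success_set n \<alpha> M m out d. w k)"
    unfolding success_set_def by (rule sum.inter_filter[symmetric]) simp
  finally show ?thesis .
qed

lemma success_sets_hard_metric_disjoint:
  assumes "\<alpha> < 3" "Y \<subseteq> cross_pairs n" "Y' \<subseteq> cross_pairs n" "Y \<noteq> Y'"
  shows "success_set n \<alpha> M m out (hard_metric n Y) \<inter> success_set n \<alpha> M m out (hard_metric n Y') = {}"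
  using good_estimate_hard_metric_inject[OF assms(1-3)] assms(4) unfolding success_set_def by blast

section \<open>The polynomial method\<close>

text \<open>The coordinates of f Y are multilinear polynomials in the indicators [e \<in> Y]
  built from the monomials [S \<subseteq> Y] with S \<in> SS.\<close>
inductive monomial_span :: "'e set set \<Rightarrow> ('e set \<Rightarrow> nat \<Rightarrow> complex) \<Rightarrow> bool" for SS where
  zero: "monomial_span SS (\<lambda>Y k. 0)"
| monomial: "S \<in> SS \<Longrightarrow> monomial_span SS (\<lambda>Y k. if S \<subseteq> Y then w k else 0)"
| add: "monomial_span SS f \<Longrightarrow> monomial_span SS g \<Longrightarrow> monomial_span SS (\<lambda>Y k. f Y k + g Y k)"

lemma monomial_span_cong:
  assumes "monomial_span SS f" "\<And>Y k. g Y k = f Y k"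
  shows "monomial_span SS g"
proof -
  have "g = f"
    using assms(2) by (intro ext)
  with assms(1) show ?thesis by simp
qed

lemma monomial_span_sum:
  assumes "finite F" "\<And>x. x \<in> F \<Longrightarrow> monomial_span SS (f x)"
  shows "monomial_span SS (\<lambda>Y k. \<Sum>x\<in>F. f x Y k)"
  using assms by (induction F rule: finite_induct) (simp_all add: monomial_span.zero monomial_span.add)

lemma monomial_span_mat_act:
  assumes "monomial_span SS f"
  shows "monomial_span SS (\<lambda>Y. mat_act K A (f Y))"
  using assms
proof induction
  case zero
  then show ?case by (simp add: monomial_span.zero)
next
  case (monomial S w)
  then show ?case by (simp add: mat_act_if monomial_span.monomial)
next
  case (add f g)
  then show ?case by (simp add: mat_act_add monomial_span.add)
qed

lemma monomial_span_explicit: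
  assumes "monomial_span SS f" "finite SS"
  shows "\<exists>v. \<forall>Y k. f Y k = (\<Sum>S\<in>SS. of_bool (S \<subseteq> Y) * v S k)"
  using assms
proof induction
  case zero
  show ?case by (intro exI[of _ "\<lambda>S k. 0"]) simp
next
  case (monomial S w)
  have "(if S \<subseteq> Y then w k else 0) =
        (\<Sum>S'\<in>SS. of_bool (S' \<subseteq> Y) * (if S' = S then w k else 0))" for Y k
    using monomial by (simp add: if_distrib[of "\<lambda>x. _ * x"] sum.delta' cong: if_cong)
  then show ?case
    by (intro exI[of _ "\<lambda>S' k. if S' = S then w k else 0"]) blast
next
  case (add f g)
  then obtain v v' where "\<forall>Y k. f Y k = (\<Sum>S\<in>SS. of_bool (S \<subseteq> Y) * v S k)"
    and "\<forall>Y k. g Y k = (\<Sum>S\<in>SS. of_bool (S \<subseteq> Y) * v' S k)" by blast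
  then show ?case
    by (intro exI[of _ "\<lambda>S k. v S k + v' S k"]) (simp add: distrib_left sum.distrib)
qed

lemma mat_act_affine:
  assumes "\<And>r c. r < K \<Longrightarrow> c < K \<Longrightarrow>
             A $$ (r, c) = B $$ (r, c) + (\<Sum>e\<in>E. x e * (C e $$ (r, c) - B $$ (r, c)))"
  shows "mat_act K A \<phi> r = mat_act K B \<phi> r + (\<Sum>e\<in>E. x e * (mat_act K (C e) \<phi> r - mat_act K B \<phi> r))"
proof (cases "r < K")
  case True
  have "mat_act K A \<phi> r =
        (\<Sum>c<K. B $$ (r, c) * \<phi> c + (\<Sum>e\<in>E. x e * (C e $$ (r, c) - B $$ (r, c))) * \<phi> c)"
    unfolding mat_act_def using True by (simp add: assms distrib_right)
  also have "\<dots> = mat_act K B \<phi> r + (\<Sum>c<K. (\<Sum>e\<in>E. x e * (C e $$ (r, c) - B $$ (r, c))) * \<phi> c)"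
    unfolding mat_act_def using True by (simp add: sum.distrib)
  also have "(\<Sum>c<K. (\<Sum>e\<in>E. x e * (C e $$ (r, c) - B $$ (r, c))) * \<phi> c) =
             (\<Sum>e\<in>E. \<Sum>c<K. x e * (C e $$ (r, c) - B $$ (r, c)) * \<phi> c)"
    by (subst sum.swap) (simp add: sum_distrib_right)
  also have "\<dots> = (\<Sum>e\<in>E. x e * (mat_act K (C e) \<phi> r - mat_act K B \<phi> r))"
    unfolding mat_act_def using True
    by (simp add: sum_subtractf[symmetric] sum_distrib_left algebra_simps)
  finally show ?thesis .
qed (simp add: mat_act_def)

lemma hard_metric_pair_cases:
  assumes "i < n" "j < n"
  shows "(\<forall>Y. hard_metric n Y i j = hard_metric n {} i j) \<or>
         (\<exists>p\<in>cross_pairs n. \<forall>Y. hard_metric n Y i j = (if p \<in> Y then 3 else 1))"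
proof (cases "i \<noteq> j \<and> (i < n div 2) \<noteq> (j < n div 2)")
  case True
  then have "(min i j, max i j) \<in> cross_pairs n"
    using assms unfolding cross_pairs_def by (auto simp: min_def max_def)
  with True show ?thesis
    unfolding hard_metric_def by auto
next
  case False
  then show ?thesis
    unfolding hard_metric_def by auto
qed

text \<open>Each entry reads one distance, and as Y varies that distance takes at most two values.\<close>
lemma oracle_mat_hard_metric_entry:
  assumes "r < qdim n M m" "c < qdim n M m"
  shows "oracle_mat n M m (hard_metric n Y) $$ (r, c) =
           oracle_mat n M m (hard_metric n {}) $$ (r, c) +
           (\<Sum>e\<in>cross_pairs n. of_bool (e \<in> Y) *
              (oracle_mat n M m (hard_metric n {e}) $$ (r, c) - oracle_mat n M m (hard_metric n {}) $$ (r, c)))"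
proof -
  obtain i j g where ij: "i < n" "j < n" and g: "\<And>d. oracle_mat n M m d $$ (r, c) = g (d i j)"
    using oracle_mat_entry_local[OF assms] by blast
  from hard_metric_pair_cases[OF ij] show ?thesis
  proof (elim disjE bexE)
    assume "\<forall>Y. hard_metric n Y i j = hard_metric n {} i j"
    then obtain d0 where "\<And>Z. hard_metric n Z i j = d0" by blast
    then show ?thesis unfolding g by simp
  next
    fix p assume p: "p \<in> cross_pairs n" "\<forall>Y. hard_metric n Y i j = (if p \<in> Y then 3 else 1)"
    have "(\<Sum>e\<in>cross_pairs n. of_bool (e \<in> Y) * (g (hard_metric n {e} i j) - g (hard_metric n {} i j))) =
          (\<Sum>e\<in>cross_pairs n. if e = p then of_bool (p \<in> Y) * (g 3 - g 1) else 0)"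
      using p(2) by (intro sum.cong refl) auto
    also have "\<dots> = of_bool (p \<in> Y) * (g 3 - g 1)"
      using p(1) finite_cross_pairs by simp
    finally show ?thesis
      unfolding g using p(2) by simp
  qed
qed

lemma monomial_span_oracle_step:
  assumes "monomial_span (subsets_upto (cross_pairs n) t) f"
  shows "monomial_span (subsets_upto (cross_pairs n) (Suc t))
           (\<lambda>Y. mat_act (qdim n M m) (oracle_mat n M m (hard_metric n Y)) (f Y))"
  using assms
proof induction
  case zero
  then show ?case by (simp add: monomial_span.zero)
next
  case (monomial S w)
  let ?O = "\<lambda>Z. mat_act (qdim n M m) (oracle_mat n M m (hard_metric n Z)) w"
  have S: "S \<subseteq> cross_pairs n" "card S \<le> t" "finite S"
    using monomial finite_cross_pairs unfolding subsets_upto_def by (auto intro: finite_subset)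
  have "monomial_span (subsets_upto (cross_pairs n) (Suc t)) (\<lambda>Y k.
          (if S \<subseteq> Y then ?O {} k else 0) +
          (\<Sum>e\<in>cross_pairs n. if insert e S \<subseteq> Y then ?O {e} k - ?O {} k else 0))"
    using S by (intro monomial_span.add monomial_span.monomial monomial_span_sum finite_cross_pairs)
      (auto simp: subsets_upto_def card_insert_if)
  moreover have "mat_act (qdim n M m) (oracle_mat n M m (hard_metric n Y)) (\<lambda>k. if S \<subseteq> Y then w k else 0) k =
          (if S \<subseteq> Y then ?O {} k else 0) +
          (\<Sum>e\<in>cross_pairs n. if insert e S \<subseteq> Y then ?O {e} k - ?O {} k else 0)" for Y k
    using mat_act_affine[OF oracle_mat_hard_metric_entry, of "qdim n M m" n M m Y w k]
    by (cases "S \<subseteq> Y") (auto simp: mat_act_if intro!: sum.cong)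
  ultimately show ?case
    by (rule monomial_span_cong)
next
  case (add f g)
  then show ?case by (simp add: mat_act_add monomial_span.add)
qed

lemma monomial_span_run_fn:
  assumes "monomial_span (subsets_upto (cross_pairs n) t) f"
  shows "monomial_span (subsets_upto (cross_pairs n) (t + length Us))
           (\<lambda>Y. run_fn (qdim n M m) (oracle_mat n M m (hard_metric n Y)) Us (f Y))"
  using assms
proof (induction Us arbitrary: t f)
  case Nil
  then show ?case by simp
next
  case (Cons U Us)
  have "monomial_span (subsets_upto (cross_pairs n) (Suc t)) (\<lambda>Y.
          mat_act (qdim n M m) U (mat_act (qdim n M m) (oracle_mat n M m (hard_metric n Y)) (f Y)))"
    using Cons.prems by (intro monomial_span_mat_act monomial_span_oracle_step)
  from Cons.IH[OF this] show ?case by simp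
qed

lemma final_state_hard_metric_expansion:
  assumes "U0 \<in> carrier_mat (qdim n M m) (qdim n M m)"
    and "\<forall>U\<in>set Us. U \<in> carrier_mat (qdim n M m) (qdim n M m)"
  shows "\<exists>v. \<forall>Y. \<forall>k<qdim n M m. final_state n M m U0 Us (hard_metric n Y) $ k =
            (\<Sum>S\<in>subsets_upto (cross_pairs n) (length Us). of_bool (S \<subseteq> Y) * v S k)"
proof -
  let ?K = "qdim n M m" and ?\<phi> = "($) (U0 *\<^sub>v unit_vec (qdim n M m) 0)"
  have "{} \<in> subsets_upto (cross_pairs n) 0"
    by (simp add: subsets_upto_def)
  from monomial_span.monomial[OF this, of ?\<phi>]
  have "monomial_span (subsets_upto (cross_pairs n) 0) (\<lambda>Y. ?\<phi>)"
    by simp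
  then have "monomial_span (subsets_upto (cross_pairs n) (length Us))
               (\<lambda>Y. run_fn ?K (oracle_mat n M m (hard_metric n Y)) Us ?\<phi>)"
    using monomial_span_run_fn by fastforce
  then obtain v where "\<forall>Y k. run_fn ?K (oracle_mat n M m (hard_metric n Y)) Us ?\<phi> k =
      (\<Sum>S\<in>subsets_upto (cross_pairs n) (length Us). of_bool (S \<subseteq> Y) * v S k)"
    using monomial_span_explicit finite_subsets_upto finite_cross_pairs by blast
  moreover have "final_state n M m U0 Us (hard_metric n Y) $ k =
                 run_fn ?K (oracle_mat n M m (hard_metric n Y)) Us ?\<phi> k" if "k < ?K" for Y k
    unfolding final_state_def using assms that by (intro run_after_nth oracle_mat_carrier) auto
  ultimately show ?thesis by auto
qed

lemma final_state_weight_bound: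
  assumes "0 < qdim n M m" "unitary_of_dim (qdim n M m) U0"
    and "\<forall>U\<in>set Us. unitary_of_dim (qdim n M m) U"
  obtains w where "\<And>k. 0 \<le> w k"
    "(\<Sum>k<qdim n M m. w k) \<le> real (card (subsets_upto (cross_pairs n) (length Us)))"
    "\<And>Y k. k < qdim n M m \<Longrightarrow> (cmod (final_state n M m U0 Us (hard_metric n Y) $ k))\<^sup>2 \<le> w k"
proof -
  let ?K = "qdim n M m" and ?SS = "subsets_upto (cross_pairs n) (length Us)"
  let ?\<psi> = "\<lambda>Y. ($) (final_state n M m U0 Us (hard_metric n Y))"
  have "U0 \<in> carrier_mat ?K ?K" "\<forall>U\<in>set Us. U \<in> carrier_mat ?K ?K"
    using assms(2,3) unfolding unitary_of_dim_def by auto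
  from final_state_hard_metric_expansion[OF this]
  obtain v where "\<forall>Y. \<forall>k<?K. ?\<psi> Y k = (\<Sum>S\<in>?SS. of_bool (S \<subseteq> Y) * v S k)" ..
  then have expansion: "\<And>Y k. k < ?K \<Longrightarrow> ?\<psi> Y k = (\<Sum>S\<in>?SS. of_bool (S \<subseteq> Y) * v S k)"
    by blast
  have unit: "sq_norm ?K (?\<psi> Y) = 1" for Y
    using assms by (rule sq_norm_final_state)
  obtain w where "\<forall>k. 0 \<le> w k" "(\<Sum>k<?K. w k) \<le> real (card ?SS)"
    "\<forall>Y. \<forall>k<?K. (cmod (?\<psi> Y k))\<^sup>2 \<le> w k"
    using unit_vectors_weight_bound[where \<psi> = ?\<psi>, OF finite_subsets_upto[OF finite_cross_pairs] unit expansion]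
    by blast
  then show ?thesis
    by (intro that[of w]) auto
qed

lemma card_cross_pairs_le_queries:
  assumes "3 < M" "\<alpha> < 3" and sol: "solves_metric_estimation n \<alpha> M m U0 Us out"
  shows "card (cross_pairs n) \<le> 3 * length Us"
proof -
  let ?K = "qdim n M m" and ?E = "cross_pairs n" and ?SS = "subsets_upto (cross_pairs n) (length Us)"
  let ?A = "\<lambda>Y. success_set n \<alpha> M m out (hard_metric n Y)"
  have U0: "unitary_of_dim ?K U0" and Us: "\<forall>U\<in>set Us. unitary_of_dim ?K U"
    and success: "\<And>Y. 2/3 \<le> success_prob n M m \<alpha> U0 Us out (hard_metric n Y)"
    using sol is_nat_metric_hard_metric[OF assms(1)] unfolding solves_metric_estimation_def by auto
  have "0 < ?K"
    using success[of "{}"] unfolding success_prob_def by (cases ?K) auto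
  from final_state_weight_bound[OF this U0 Us]
  obtain w where w: "\<And>k. 0 \<le> w k" "(\<Sum>k<?K. w k) \<le> real (card ?SS)"
    "\<And>Y k. k < ?K \<Longrightarrow> (cmod (final_state n M m U0 Us (hard_metric n Y) $ k))\<^sup>2 \<le> w k"
    by blast
  have "real (card (Pow ?E)) * (2/3) \<le> (\<Sum>k<?K. w k)"
  proof (rule disjoint_family_weight_bound[OF _ w(1)])
    show "finite (Pow ?E)"
      using finite_cross_pairs by simp
    show "?A Y \<subseteq> {..<?K}" for Y
      unfolding success_set_def by auto
    show "?A Y \<inter> ?A Y' = {}" if "Y \<in> Pow ?E" "Y' \<in> Pow ?E" "Y \<noteq> Y'" for Y Y'
      using that assms(2) by (intro success_sets_hard_metric_disjoint) auto
    show "2/3 \<le> (\<Sum>k\<in>?A Y. w k)" for Y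
      using success[of Y] success_prob_le_weight[OF w(3)] by (rule order_trans)
  qed
  with w(2) have "real (card (Pow ?E)) * (2/3) \<le> real (card ?SS)"
    by linarith
  then have "real (2 * 2 ^ card ?E) \<le> real (3 * card ?SS)"
    using finite_cross_pairs by (simp add: card_Pow; linarith)
  then have "2 * 2 ^ card ?E \<le> 3 * card ?SS"
    by (simp only: of_nat_le_iff)
  then show ?thesis
    using card_le_of_pow_le_subsets_upto finite_cross_pairs by blast
qed

theorem mainTheorem5:
  fixes \<alpha> :: real
  assumes "1 < \<alpha>" and "\<alpha> < 3"
  shows "\<exists>c>0. \<exists>N. \<forall>n\<ge>N. \<forall>M m U0 Us out.
           n < M \<and> solves_metric_estimation n \<alpha> M m U0 Us out \<longrightarrow>
           real (length Us) \<ge> c * real n ^ 2"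
proof (intro exI[of _ "1/15"] conjI exI[of _ 3] allI impI)
  fix n M m U0 Us out
  assume n: "3 \<le> n" and sol: "n < M \<and> solves_metric_estimation n \<alpha> M m U0 Us out"
  have "3 < M"
    using n sol by linarith
  then have "card (cross_pairs n) \<le> 3 * length Us"
    using card_cross_pairs_le_queries[OF _ assms(2)] sol by blast
  moreover have "n\<^sup>2 \<le> 4 * card (cross_pairs n) + 1"
    by (rule square_le_card_cross_pairs)
  moreover have "9 \<le> n\<^sup>2"
    using power_mono[OF n, of 2] by simp
  ultimately have "n\<^sup>2 \<le> 15 * length Us"
    by linarith
  then show "real (length Us) \<ge> 1/15 * real n ^ 2"
    by (simp add: of_nat_le_iff[symmetric, where 'a = real])
qed simp

end
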